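(* The Hopf algebra $\mathbf{PM}_k$ is freely generated as an algebra by the elements $\mathbf{E}_M$ (resp. $\mathbf{H}_M$) where the $M$ are connected (resp. anti-connected) $k$-packed matrices.
   Context: Let $\mathbb{K}$ be a field of characteristic zero, $k \geq 1$, $A_k := \{0,1,\dots,k\}$. A $k$-packed matrix of size $n$ is an $n \times n$ matrix with entries in $A_k$ with at least one nonzero entry in each row and each column; $\mathcal{P}_k$ denotes the set of all of them ($\emptyset$ has size $0$). $\mathbf{PM}_k$ is the vector space with basis $(\mathbf{F}_M)_{M \in \mathcal{P}_k}$, with product $\mathbf{F}_{M_1} \cdot \mathbf{F}_{M_2} = \sum_{M \in \mathrm{Sh}_c(M_1,M_2)} \mathbf{F}_M$, where, for $M_1, M_2$ of sizes $n_1, n_2$, $\mathrm{Sh}_c(M_1,M_2)$ is the set of matrices obtained by shuffling the columns of $M_1$ with an $n_2 \times n_1$ zero block placed below it, with the columns of $M_2$ with an $n_1 \times n_2$ zero block placed above it; and with coproduct $\Delta(\mathbf{F}_M) = \sum_{M = [M_1|M_2]} \mathbf{F}_{\operatorname{cp}(M_1)} \otimes \mathbf{F}_{\operatorname{cp}(M_2)}$, the sum over splittings of $M$ into a left block $M_1$ and right block $M_2$ of columns such that the compressions $\operatorname{cp}(M_i)$ (deletion of null rows and columns) are square. For $k$-packed $M_1, M_2$ of sizes $n_1, n_2$, define the over operation $\mathrm{ov}(M_1, M_2) := \begin{pmatrix} M_1 & 0 \\ 0 & M_2 \end{pmatrix}$ and the under operation $\mathrm{un}(M_1,M_2) := \begin{pmatrix}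 0 & M_1 \\ M_2 & 0 \end{pmatrix}$ (zero blocks of sizes $n_1\times n_2$ and $n_2 \times n_1$). A $k$-packed matrix $M \ne \emptyset$ is connected (resp. anti-connected) if $M = \mathrm{ov}(M_1,M_2)$ (resp. $M = \mathrm{un}(M_1,M_2)$) with $M_1, M_2$ $k$-packed implies $M_1 = M$ or $M_2 = M$. Define a relation $\to$ on $k$-packed matrices of size $n$: $M_1 \to M_2$ if there is $i \in [n-1]$ such that, with $s$ the number of $0$ ending the $i$th column of $M_1$ and $p$ the number of $0$ starting its $(i+1)$st column, $s + p \geq n$ and $M_2$ is obtained from $M_1$ by exchanging its $i$th and $(i+1)$st columns. Let $\leq_{\mathrm{M}}$ be the reflexive and transitive closure of $\to$. Set $\mathbf{E}_M := \sum_{M \leq_{\mathrm{M}} M'} \mathbf{F}_{M'}$ and $\mathbf{H}_M := \sum_{M' \leq_{\mathrm{M}} M} \mathbf{F}_{M'}$ (these are bases of $\mathbf{PM}_k$, and satisfy $\mathbf{E}_{M_1}\cdot\mathbf{E}_{M_2} = \mathbf{E}_{\mathrm{ov}(M_1,M_2)}$, $\mathbf{H}_{M_1}\cdot\mathbf{H}_{M_2} = \mathbf{H}_{\mathrm{un}(M_1,M_2)}$). *)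

theory Defs
  imports Main
begin

text \<open>Matrices are represented as lists of rows (nat list list); an n x n matrix
  is a list of n rows each of length n. The empty matrix is [].\<close>

definition packed :: "nat \<Rightarrow> nat list list \<Rightarrow> bool" where
  "packed k M \<longleftrightarrow>
     (\<forall>r\<in>set M. length r = length M \<and> (\<forall>x\<in>set r. x \<le> k) \<and> (\<exists>x\<in>set r. x \<noteq> 0)) \<and>
     (\<forall>j<length M. \<exists>r\<in>set M. r ! j \<noteq> 0)"

definition col :: "nat list list \<Rightarrow> nat \<Rightarrow> nat list" where
  "col M j = map (\<lambda>r. r ! j) M"

definition cols :: "nat list list \<Rightarrow> nat list list" where
  "cols M = map (col M) [0..<length M]"

definition Sh_c :: "nat list list \<Rightarrow> nat list list \<Rightarrow> nat list list set" where
  "Sh_c M1 M2 = transpose ` shuffles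
      (map (\<lambda>c. c @ replicate (length M2) 0) (cols M1))
      (map (\<lambda>c. replicate (length M1) 0 @ c) (cols M2))"

definition ov :: "nat list list \<Rightarrow> nat list list \<Rightarrow> nat list list" where
  "ov M1 M2 = map (\<lambda>r. r @ replicate (length M2) 0) M1 @
              map (\<lambda>r. replicate (length M1) 0 @ r) M2"

definition un :: "nat list list \<Rightarrow> nat list list \<Rightarrow> nat list list" where
  "un M1 M2 = map (\<lambda>r. replicate (length M2) 0 @ r) M1 @
              map (\<lambda>r. r @ replicate (length M1) 0) M2"

definition connected_pm :: "nat \<Rightarrow> nat list list \<Rightarrow> bool" where
  "connected_pm k M \<longleftrightarrow> M \<noteq> [] \<and>
     (\<forall>M1 M2. packed k M1 \<and> packed k M2 \<and> M = ov M1 M2 \<longrightarrow> M1 = M \<or> M2 = M)"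

definition anticonnected_pm :: "nat \<Rightarrow> nat list list \<Rightarrow> bool" where
  "anticonnected_pm k M \<longleftrightarrow> M \<noteq> [] \<and>
     (\<forall>M1 M2. packed k M1 \<and> packed k M2 \<and> M = un M1 M2 \<longrightarrow> M1 = M \<or> M2 = M)"

definition swap_cols :: "nat \<Rightarrow> nat list list \<Rightarrow> nat list list" where
  "swap_cols i M = map (\<lambda>r. r[i := r ! Suc i, Suc i := r ! i]) M"

definition mstep :: "nat \<Rightarrow> nat list list \<Rightarrow> nat list list \<Rightarrow> bool" where
  "mstep k A B \<longleftrightarrow> packed k A \<and> packed k B \<and>
     (\<exists>i. Suc i < length A \<and>
        length (takeWhile (\<lambda>x. x = 0) (rev (col A i)))
          + length (takeWhile (\<lambda>x. x = 0) (col A (Suc i))) \<ge> length A \<and>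
        B = swap_cols i A)"

definition le_M :: "nat \<Rightarrow> nat list list \<Rightarrow> nat list list \<Rightarrow> bool" where
  "le_M k = (mstep k)\<^sup>*\<^sup>*"

text \<open>Elements of PM_k: finitely supported functions from matrices to the field,
  supported on k-packed matrices (coordinates in the basis F_M).\<close>
definition PM :: "nat \<Rightarrow> (nat list list \<Rightarrow> 'a::field) set" where
  "PM k = {x. finite {M. x M \<noteq> 0} \<and> (\<forall>M. x M \<noteq> 0 \<longrightarrow> packed k M)}"

definition F :: "nat list list \<Rightarrow> nat list list \<Rightarrow> 'a::field" where
  "F M = (\<lambda>M'. if M' = M then 1 else 0)"

definition pm_mult :: "(nat list list \<Rightarrow> 'a::field) \<Rightarrow> (nat list list \<Rightarrow> 'a) \<Rightarrow> nat list list \<Rightarrow> 'a" where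
  "pm_mult x y = (\<lambda>M. \<Sum>M1\<in>{M. x M \<noteq> 0}. \<Sum>M2\<in>{M. y M \<noteq> 0}.
      x M1 * y M2 * (if M \<in> Sh_c M1 M2 then 1 else 0))"

definition E :: "nat \<Rightarrow> nat list list \<Rightarrow> nat list list \<Rightarrow> 'a::field" where
  "E k M = (\<lambda>M'. if packed k M \<and> le_M k M M' then 1 else 0)"

definition H :: "nat \<Rightarrow> nat list list \<Rightarrow> nat list list \<Rightarrow> 'a::field" where
  "H k M = (\<lambda>M'. if packed k M \<and> le_M k M' M then 1 else 0)"

definition monomial :: "(nat list list \<Rightarrow> nat list list \<Rightarrow> 'a::field) \<Rightarrow> nat list list list
    \<Rightarrow> nat list list \<Rightarrow> 'a" where
  "monomial g w = foldr (\<lambda>M acc. pm_mult (g M) acc) w (F [])"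

text \<open>The algebra PM_k is freely generated (as an associative unital algebra) by the
  family g indexed by S: the noncommutative monomials in the generators form a basis.\<close>
definition freely_generates ::
    "nat \<Rightarrow> (nat list list \<Rightarrow> nat list list \<Rightarrow> 'a::field) \<Rightarrow> nat list list set \<Rightarrow> bool" where
  "freely_generates k g S \<longleftrightarrow>
     (\<forall>W c. finite W \<and> W \<subseteq> lists S \<and> (\<forall>M. (\<Sum>w\<in>W. c w * monomial g w M) = 0)
        \<longrightarrow> (\<forall>w\<in>W. c w = 0)) \<and>
     (\<forall>x\<in>PM k. \<exists>W c. finite W \<and> W \<subseteq> lists S \<and> x = (\<lambda>M. \<Sum>w\<in>W. c w * monomial g w M))"

end

(* Read through its columns, \<le>\<^sub>M is the reflexive transitive closure of exchanging
   adjacent columns c, d such that every nonzero entry of c lies above every nonzero entry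
   of d. In ov M1 M2 each column coming from M1 lies above each column coming from M2, so the
   matrices above ov M1 M2 are exactly the column shuffles of a matrix above M1 with a matrix
   above M2, and such a shuffle determines its two factors. Hence E_M1 E_M2 = E_(ov M1 M2), and
   dually H_M1 H_M2 = H_(un M1 M2). Every packed matrix is in a unique way an ov-product of
   connected matrices (an un-product of anticonnected ones), so the monomials in the
   generators are exactly the E_M (resp. H_M) with M packed. These are unitriangular with
   respect to the partial order \<le>\<^sub>M, whose intervals are finite, and therefore form a
   basis. *)

theory Submission
  imports Defs "HOL-Library.Function_Algebras" "HOL.Modules"
begin

section \<open>Adjacent swaps\<close>

definition swap_step :: "('a \<Rightarrow> 'a \<Rightarrow> bool) \<Rightarrow> 'a list \<Rightarrow> 'a list \<Rightarrow> bool" where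
  "swap_step R xs ys \<longleftrightarrow> (\<exists>u c d v. xs = u @ c # d # v \<and> ys = u @ d # c # v \<and> R c d)"

abbreviation swaps :: "('a \<Rightarrow> 'a \<Rightarrow> bool) \<Rightarrow> 'a list \<Rightarrow> 'a list \<Rightarrow> bool" where
  "swaps R \<equiv> (swap_step R)\<^sup>*\<^sup>*"

lemma swap_step_elim:
  assumes "swap_step R xs ys"
  obtains u c d v where "xs = u @ c # d # v" "ys = u @ d # c # v" "R c d"
  using assms unfolding swap_step_def by blast

lemma swaps_set: "swaps R xs ys \<Longrightarrow> set ys = set xs"
proof (induction rule: rtranclp_induct)
  case (step ys zs)
  thus ?case by (elim swap_step_elim) auto
qed simp

lemma swaps_length: "swaps R xs ys \<Longrightarrow> length ys = length xs"
proof (induction rule: rtranclp_induct)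
  case (step ys zs)
  thus ?case by (elim swap_step_elim) auto
qed simp

lemma swaps_converse_iff: "swaps (\<lambda>x y. R y x) xs ys \<longleftrightarrow> swaps R ys xs"
proof -
  have "swap_step (\<lambda>x y. R y x) = (swap_step R)\<inverse>\<inverse>"
    by (auto simp: fun_eq_iff swap_step_def)
  thus ?thesis by (simp add: rtranclp_conversep)
qed

lemma swaps_append_left: "swaps R xs ys \<Longrightarrow> swaps R (w @ xs) (w @ ys)"
proof (induction rule: rtranclp_induct)
  case (step ys zs)
  then obtain u c d v where "ys = u @ c # d # v" "zs = u @ d # c # v" "R c d"
    by (auto elim: swap_step_elim)
  hence "swap_step R (w @ ys) (w @ zs)"
    unfolding swap_step_def by (intro exI[of _ "w @ u"]) simp
  thus ?case using step.IH by simp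
qed simp

lemma swaps_append_right: "swaps R xs ys \<Longrightarrow> swaps R (xs @ w) (ys @ w)"
proof (induction rule: rtranclp_induct)
  case (step ys zs)
  then obtain u c d v where "ys = u @ c # d # v" "zs = u @ d # c # v" "R c d"
    by (auto elim: swap_step_elim)
  hence "swap_step R (ys @ w) (zs @ w)"
    unfolding swap_step_def by (intro exI[of _ u] exI[of _ c] exI[of _ d] exI[of _ "v @ w"]) simp
  thus ?case using step.IH by simp
qed simp

text \<open>Filtering a swap either performs the same swap or changes nothing.\<close>
lemma swaps_filter: "swaps R xs ys \<Longrightarrow> swaps R (filter P xs) (filter P ys)"
proof (induction rule: rtranclp_induct)
  case (step ys zs)
  then obtain u c d v where e: "ys = u @ c # d # v" "zs = u @ d # c # v" "R c d"
    by (auto elim: swap_step_elim)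
  have "swaps R (filter P ys) (filter P zs)"
  proof (cases "P c \<and> P d")
    case True
    hence "swap_step R (filter P ys) (filter P zs)"
      unfolding swap_step_def e using e(3)
      by (intro exI[of _ "filter P u"] exI[of _ c] exI[of _ d] exI[of _ "filter P v"]) simp
    thus ?thesis ..
  next
    case False
    thus ?thesis using e by auto
  qed
  thus ?case using step.IH by simp
qed simp

lemma swaps_map_iff:
  assumes "\<And>x y. x \<in> set xs \<Longrightarrow> y \<in> set xs \<Longrightarrow> R (f x) (f y) \<longleftrightarrow> S x y"
  shows "swaps R (map f xs) zs \<longleftrightarrow> (\<exists>ys. swaps S xs ys \<and> zs = map f ys)"
proof
  assume "swaps R (map f xs) zs"
  thus "\<exists>ys. swaps S xs ys \<and> zs = map f ys"
  proof (induction rule: rtranclp_induct)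
    case (step zs zs')
    then obtain ys where ys: "swaps S xs ys" "zs = map f ys" by blast
    obtain u c d v where e: "map f ys = u @ c # d # v" "zs' = u @ d # c # v" "R c d"
      using step.hyps(2) ys(2) by (auto elim: swap_step_elim)
    then obtain u0 c0 d0 v0 where ys': "ys = u0 @ c0 # d0 # v0"
      and "map f u0 = u" "f c0 = c" "f d0 = d" "map f v0 = v"
      by (auto simp: map_eq_append_conv map_eq_Cons_conv)
    moreover have "c0 \<in> set xs" "d0 \<in> set xs" using swaps_set[OF ys(1)] ys' by auto
    ultimately have "swap_step S ys (u0 @ d0 # c0 # v0)" and "zs' = map f (u0 @ d0 # c0 # v0)"
      using e assms unfolding swap_step_def by (auto intro!: exI[of _ u0])
    thus ?case using rtranclp.rtrancl_into_rtrancl[OF ys(1)] by blast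
  qed auto
next
  assume "\<exists>ys. swaps S xs ys \<and> zs = map f ys"
  then obtain ys where "swaps S xs ys" "zs = map f ys" by blast
  thus "swaps R (map f xs) zs"
  proof (induction arbitrary: zs rule: rtranclp_induct)
    case (step ys ys')
    then obtain u c d v where e: "ys = u @ c # d # v" "ys' = u @ d # c # v" "S c d"
      by (auto elim: swap_step_elim)
    have "c \<in> set xs" "d \<in> set xs" using swaps_set[OF step.hyps(1)] e(1) by auto
    hence "swap_step R (map f ys) (map f ys')"
      using e assms unfolding swap_step_def by (intro exI[of _ "map f u"]) auto
    thus ?case using step.IH step.prems by (meson rtranclp.rtrancl_into_rtrancl)
  qed simp
qed

lemma swaps_move_left:
  assumes "\<forall>x\<in>set xs. R x y"
  shows "swaps R (xs @ y # ys) (y # xs @ ys)"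
  using assms
proof (induction xs)
  case (Cons x xs)
  have "swaps R (x # xs @ y # ys) (x # y # xs @ ys)"
    using Cons swaps_append_left[of R _ _ "[x]"] by simp
  moreover have "swap_step R (x # y # xs @ ys) (y # x # xs @ ys)"
    unfolding swap_step_def using Cons.prems by (intro exI[of _ "[]"]) auto
  ultimately show ?case by (simp add: rtranclp.rtrancl_into_rtrancl)
qed simp

lemma swaps_to_shuffle:
  assumes "\<forall>x\<in>set xs. \<forall>y\<in>set ys. R x y" "zs \<in> shuffles xs ys"
  shows "swaps R (xs @ ys) zs"
  using assms
proof (induction xs ys arbitrary: zs rule: shuffles.induct)
  case (3 x xs y ys)
  from "3.prems"(2) consider (left) zs' where "zs = x # zs'" "zs' \<in> shuffles xs (y # ys)"
    | (right) zs' where "zs = y # zs'" "zs' \<in> shuffles (x # xs) ys" by auto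
  thus ?case
  proof cases
    case left
    thus ?thesis using "3.IH"(1) "3.prems"(1) swaps_append_left[of R _ _ "[x]"] by simp
  next
    case right
    have "swaps R ((x # xs) @ y # ys) (y # (x # xs) @ ys)"
      using "3.prems"(1) by (intro swaps_move_left) simp
    also have "swaps R (y # (x # xs) @ ys) zs"
      using "3.IH"(2) "3.prems"(1) right swaps_append_left[of R _ _ "[y]"] by simp
    finally show ?thesis .
  qed
qed auto

lemma shuffles_filter:
  assumes "zs \<in> shuffles xs ys" "\<forall>x\<in>set xs. P x" "\<forall>y\<in>set ys. \<not> P y"
  shows "filter P zs = xs" "filter (\<lambda>z. \<not> P z) zs = ys"
proof -
  have "filter P zs \<in> shuffles (filter P xs) (filter P ys)"
    and "filter (\<lambda>z. \<not> P z) zs \<in> shuffles (filter (\<lambda>z. \<not> P z) xs) (filter (\<lambda>z. \<not> P z) ys)"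
    using filter_shuffles assms(1) by blast+
  thus "filter P zs = xs" "filter (\<lambda>z. \<not> P z) zs = ys"
    using assms(2,3) by (simp_all add: filter_id_conv filter_empty_conv)
qed

text \<open>Left to right, filter by \<open>P\<close>; right to left, move the elements of \<open>ys\<close> leftwards past
  those of \<open>xs\<close>.\<close>
lemma swaps_append_iff:
  assumes "\<forall>x\<in>set xs. P x" "\<forall>y\<in>set ys. \<not> P y" "\<forall>x\<in>set xs. \<forall>y\<in>set ys. R x y"
  shows "swaps R (xs @ ys) zs \<longleftrightarrow>
    (\<exists>xs' ys'. swaps R xs xs' \<and> swaps R ys ys' \<and> zs \<in> shuffles xs' ys')"
proof
  assume "swaps R (xs @ ys) zs"
  moreover have "filter P (xs @ ys) = xs" "filter (\<lambda>z. \<not> P z) (xs @ ys) = ys"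
    using assms(1,2) by (simp_all add: filter_id_conv filter_empty_conv)
  ultimately show "\<exists>xs' ys'. swaps R xs xs' \<and> swaps R ys ys' \<and> zs \<in> shuffles xs' ys'"
    using swaps_filter[of R "xs @ ys" zs] partition_in_shuffles[of zs P] by metis
next
  assume "\<exists>xs' ys'. swaps R xs xs' \<and> swaps R ys ys' \<and> zs \<in> shuffles xs' ys'"
  then obtain xs' ys' where r: "swaps R xs xs'" "swaps R ys ys'" "zs \<in> shuffles xs' ys'"
    by blast
  have "swaps R (xs @ ys) (xs' @ ys)" using swaps_append_right[OF r(1)] .
  also have "swaps R (xs' @ ys) (xs' @ ys')" using swaps_append_left[OF r(2)] .
  also have "swaps R (xs' @ ys') zs"
    using swaps_to_shuffle[OF _ r(3)] assms(3) swaps_set[OF r(1)] swaps_set[OF r(2)] by simp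
  finally show "swaps R (xs @ ys) zs" .
qed

lemma finite_swaps:
  "finite {ys. swaps R xs ys}" "finite {ys. swaps R ys xs}"
proof -
  have "{ys. swaps R xs ys} \<subseteq> {ys. set ys \<subseteq> set xs \<and> length ys = length xs}"
    and "{ys. swaps R ys xs} \<subseteq> {ys. set ys \<subseteq> set xs \<and> length ys = length xs}"
    using swaps_set swaps_length by fastforce+
  moreover have "finite {ys. set ys \<subseteq> set xs \<and> length ys = length xs}"
    by (rule finite_lists_length_eq) simp
  ultimately show "finite {ys. swaps R xs ys}" "finite {ys. swaps R ys xs}"
    by (auto intro: finite_subset)
qed

text \<open>If swapped pairs increase a measure, every swap increases the list of measures
  lexicographically, so swaps cannot cycle.\<close>
lemma swaps_antisym:
  fixes \<mu> :: "'a \<Rightarrow> 'b::linorder"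
  assumes mono: "\<And>x y. x \<in> set xs \<Longrightarrow> y \<in> set xs \<Longrightarrow> R x y \<Longrightarrow> \<mu> x < \<mu> y"
    and "swaps R xs ys" "swaps R ys xs"
  shows "xs = ys"
proof (rule ccontr)
  assume "xs \<noteq> ys"
  hence "(swap_step R)\<^sup>+\<^sup>+ xs xs"
    using assms(2,3) by (metis rtranclpD tranclp_rtranclp_tranclp)
  moreover have "ord_class.lexordp (map \<mu> xs) (map \<mu> zs)" if "(swap_step R)\<^sup>+\<^sup>+ xs zs" for zs
    using that
  proof (induction rule: tranclp_induct)
    case (base zs)
    then obtain u c d v where "xs = u @ c # d # v" "zs = u @ d # c # v" "R c d"
      by (auto elim: swap_step_elim)
    thus ?case using mono by (simp add: lexordp_append_left_rightI)
  next
    case (step ys zs)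
    then obtain u c d v where e: "ys = u @ c # d # v" "zs = u @ d # c # v" "R c d"
      by (auto elim: swap_step_elim)
    have "c \<in> set ys" "d \<in> set ys" using e(1) by auto
    hence "\<mu> c < \<mu> d" using mono e(3) swaps_set[OF tranclp_into_rtranclp[OF step.hyps(1)]] by simp
    hence "ord_class.lexordp (map \<mu> ys) (map \<mu> zs)" using e by (simp add: lexordp_append_left_rightI)
    thus ?case by (rule lexordp_trans[OF step.IH])
  qed
  ultimately show False using lexordp_irreflexive' by blast
qed

lemma swaps_append_map_iff:
  assumes "f ` set xs \<inter> g ` set ys = {}"
    and "\<forall>x\<in>set xs. \<forall>y\<in>set ys. R (f x) (g y)"
    and "\<And>x x'. x \<in> set xs \<Longrightarrow> x' \<in> set xs \<Longrightarrow> R (f x) (f x') \<longleftrightarrow> S x x'"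
    and "\<And>y y'. y \<in> set ys \<Longrightarrow> y' \<in> set ys \<Longrightarrow> R (g y) (g y') \<longleftrightarrow> T y y'"
  shows "swaps R (map f xs @ map g ys) zs \<longleftrightarrow>
    (\<exists>xs' ys'. swaps S xs xs' \<and> swaps T ys ys' \<and> zs \<in> shuffles (map f xs') (map g ys'))"
proof -
  have "swaps R (map f xs @ map g ys) zs \<longleftrightarrow>
    (\<exists>xs'' ys''. swaps R (map f xs) xs'' \<and> swaps R (map g ys) ys'' \<and> zs \<in> shuffles xs'' ys'')"
    using assms(1,2) by (intro swaps_append_iff[where P = "\<lambda>z. z \<in> f ` set xs"]) auto
  thus ?thesis
    using swaps_map_iff[of xs R f S] swaps_map_iff[of ys R g T] assms(3,4) by auto
qed

section \<open>Unitriangular families of indicator functions\<close>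

interpretation fun_space: module "\<lambda>(c::'b::comm_ring_1) (f::'a \<Rightarrow> 'b) x. c * f x"
  by unfold_locales (simp_all add: fun_eq_iff algebra_simps)

lemma sum_fun_apply: "(\<Sum>i\<in>I. f i) x = (\<Sum>i\<in>I. f i x)"
  by (induction I rule: infinite_finite_induct) simp_all

lemma span_image_explicit:
  assumes "x \<in> fun_space.span (f ` A)"
  shows "\<exists>W c. finite W \<and> W \<subseteq> A \<and> x = (\<lambda>y. \<Sum>w\<in>W. c w * f w y)"
proof -
  obtain t r where t: "finite t" "t \<subseteq> f ` A" and x: "x = (\<Sum>a\<in>t. (\<lambda>y. r a * a y))"
    using assms unfolding fun_space.span_explicit by blast
  obtain W where W: "W \<subseteq> A" "inj_on f W" "t = f ` W"
    using t(2) subset_image_inj by metis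
  have "x = (\<Sum>w\<in>W. (\<lambda>y. r (f w) * f w y))"
    unfolding x W(3) by (simp add: sum.reindex[OF W(2)])
  also have "\<dots> = (\<lambda>y. \<Sum>w\<in>W. r (f w) * f w y)"
    by (simp add: fun_eq_iff sum_fun_apply)
  finally have x: "x = (\<lambda>y. \<Sum>w\<in>W. (r \<circ> f) w * f w y)" by simp
  moreover have "finite W" using t(1) W(2,3) finite_image_iff by blast
  ultimately show ?thesis using W(1) by blast
qed

locale finite_upsets_order =
  fixes P :: "'a \<Rightarrow> bool" and rel :: "'a \<Rightarrow> 'a \<Rightarrow> bool"
  assumes rel_refl: "P x \<Longrightarrow> rel x x"
    and rel_trans: "rel x y \<Longrightarrow> rel y z \<Longrightarrow> rel x z"
    and rel_antisym: "P x \<Longrightarrow> rel x y \<Longrightarrow> rel y x \<Longrightarrow> x = y"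
    and upset_closed: "P x \<Longrightarrow> rel x y \<Longrightarrow> P y"
    and finite_upset: "P x \<Longrightarrow> finite {y. rel x y}"
begin

lemma card_upset_less:
  assumes "P x" "rel x y" "x \<noteq> y"
  shows "card {z. rel y z} < card {z. rel x z}"
proof (rule psubset_card_mono[OF finite_upset[OF assms(1)]])
  show "{z. rel y z} \<subset> {z. rel x z}"
    using rel_trans[OF assms(2)] rel_refl[OF assms(1)] rel_antisym[OF assms(1,2)] assms(3) by blast
qed

lemma upset_indicators_independent:
  fixes c :: "'i \<Rightarrow> 'b::field" and m :: "'i \<Rightarrow> 'a"
  assumes W: "finite W" "inj_on m W" "\<forall>w\<in>W. P (m w)"
    and zero: "\<And>y. (\<Sum>w\<in>W. c w * (if rel (m w) y then 1 else 0)) = 0"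
  shows "\<forall>w\<in>W. c w = 0"
proof (rule ccontr)
  txt \<open>Among the indices with nonzero coefficient pick one, \<open>w0\<close>, whose upset is largest;
    at \<open>m w0\<close> every other indicator with nonzero coefficient vanishes.\<close>
  define W' where "W' = {w\<in>W. c w \<noteq> 0}"
  assume "\<not> (\<forall>w\<in>W. c w = 0)"
  hence "finite W'" "W' \<noteq> {}" using W(1) by (auto simp: W'_def)
  define h where "h w = card {z. rel (m w) z}" for w
  have "Max (h ` W') \<in> h ` W'" using \<open>finite W'\<close> \<open>W' \<noteq> {}\<close> by (intro Max_in) auto
  then obtain w0 where w0: "w0 \<in> W'" "h w0 = Max (h ` W')" by (metis imageE)
  have max: "h w \<le> h w0" if "w \<in> W'" for w
    using Max_ge[OF finite_imageI[OF \<open>finite W'\<close>] imageI[OF that]] w0(2) by simp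
  have w0: "w0 \<in> W" "c w0 \<noteq> 0" using w0(1) by (auto simp: W'_def)
  have others: "c w * (if rel (m w) (m w0) then 1 else 0) = 0" if w: "w \<in> W - {w0}" for w
  proof (cases "c w = 0 \<or> \<not> rel (m w) (m w0)")
    case False
    hence "m w \<noteq> m w0" using w w0(1) W(2) by (auto dest: inj_onD)
    hence "h w0 < h w"
      unfolding h_def using False w W(3) by (intro card_upset_less) auto
    thus ?thesis using max[of w] False w by (simp add: W'_def)
  qed auto
  have "(\<Sum>w\<in>W. c w * (if rel (m w) (m w0) then 1 else 0)) =
      c w0 * (if rel (m w0) (m w0) then 1 else 0) +
      (\<Sum>w\<in>W - {w0}. c w * (if rel (m w) (m w0) then 1 else 0))"
    by (rule sum.remove[OF W(1) w0(1)])
  also have "\<dots> = c w0"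
    using sum.neutral[of "W - {w0}", OF ballI[OF others]] rel_refl W(3) w0(1) by simp
  finally show False using zero w0(2) by simp
qed

text \<open>Moebius inversion: the point indicator of \<open>x\<close> is its upset indicator minus the point
  indicators of the elements strictly above \<open>x\<close>.\<close>
lemma point_indicator_in_span:
  assumes "P x"
  shows "(\<lambda>y. if y = x then 1 else 0) \<in>
    fun_space.span {(\<lambda>y. if rel x' y then 1 else 0 :: 'b::field) | x'. P x'}"
  using assms
proof (induction "card {z. rel x z}" arbitrary: x rule: less_induct)
  case less
  let ?U = "{z. rel x z}" and ?S = "{(\<lambda>y. if rel x' y then 1 else 0 :: 'b) | x'. P x'}"
  have "(\<lambda>y. if rel x y then 1 else 0) = (\<Sum>z\<in>?U. (\<lambda>y. if y = z then 1 else 0 :: 'b))"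
    using finite_upset[OF less.prems] by (simp add: fun_eq_iff sum_fun_apply)
  also have "\<dots> = (\<lambda>y. if y = x then 1 else 0) + (\<Sum>z\<in>?U - {x}. (\<lambda>y. if y = z then 1 else 0))"
    using sum.remove[OF finite_upset[OF less.prems]] rel_refl[OF less.prems] by simp
  finally have point: "(\<lambda>y. if y = x then 1 else 0) =
      (\<lambda>y. if rel x y then 1 else 0) - (\<Sum>z\<in>?U - {x}. (\<lambda>y. if y = z then 1 else 0 :: 'b))"
    by (simp add: algebra_simps)
  have "(\<lambda>y. if y = z then 1 else 0) \<in> fun_space.span ?S" if "z \<in> ?U - {x}" for z
    using that less.hyps[of z] card_upset_less[OF less.prems] upset_closed[OF less.prems] by auto
  moreover have "(\<lambda>y. if rel x y then 1 else 0) \<in> fun_space.span ?S"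
    using less.prems by (intro fun_space.span_base) blast
  ultimately show ?case
    unfolding point by (intro fun_space.span_diff fun_space.span_sum) auto
qed

lemma finite_support_in_span:
  assumes "finite {y. x y \<noteq> 0}" "\<And>y. x y \<noteq> 0 \<Longrightarrow> P y"
  shows "x \<in> fun_space.span {(\<lambda>y. if rel x' y then 1 else 0 :: 'b::field) | x'. P x'}"
proof -
  have "x = (\<Sum>z\<in>{y. x y \<noteq> 0}. (\<lambda>y. x z * (if y = z then 1 else 0)))"
    using assms(1) by (auto simp: fun_eq_iff sum_fun_apply if_distrib cong: if_cong)
  also have "\<dots> \<in> fun_space.span {(\<lambda>y. if rel x' y then 1 else 0) | x'. P x'}"
    using point_indicator_in_span assms(2)
    by (intro fun_space.span_sum fun_space.span_scale) auto
  finally show ?thesis .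
qed

end

lemma monomial_eq_foldr:
  assumes mult: "\<And>A B. packed k A \<Longrightarrow> packed k B \<Longrightarrow> pm_mult (g A) (g B) = g (op A B)"
    and op_closed: "\<And>A B. packed k A \<Longrightarrow> packed k B \<Longrightarrow> packed k (op A B)"
    and unit: "g [] = F []"
    and w: "\<forall>M\<in>set w. packed k M"
  shows "monomial g w = g (foldr op w []) \<and> packed k (foldr op w [])"
  using w
proof (induction w)
  case (Cons a w)
  thus ?case using mult op_closed by (simp add: monomial_def)
qed (simp add: monomial_def unit packed_def)

lemma freely_generates_if_unitriangular:
  fixes g :: "nat list list \<Rightarrow> nat list list \<Rightarrow> 'a::field"
    and op :: "nat list list \<Rightarrow> nat list list \<Rightarrow> nat list list"
  assumes order: "finite_upsets_order (packed k) rel"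
    and g: "\<And>M. packed k M \<Longrightarrow> g M = (\<lambda>M'. if rel M M' then 1 else 0)"
    and mult: "\<And>A B. packed k A \<Longrightarrow> packed k B \<Longrightarrow> pm_mult (g A) (g B) = g (op A B)"
    and op_closed: "\<And>A B. packed k A \<Longrightarrow> packed k B \<Longrightarrow> packed k (op A B)"
    and unit: "g [] = F []"
    and S: "S \<subseteq> {M. packed k M}"
    and bij: "bij_betw (\<lambda>w. foldr op w []) (lists S) {M. packed k M}"
  shows "freely_generates k g S"
proof -
  interpret finite_upsets_order "packed k" rel by (rule order)
  define prod where "prod w = foldr op w []" for w
  have monomial: "packed k (prod w)" "monomial g w = (\<lambda>M. if rel (prod w) M then 1 else 0)"
    if "w \<in> lists S" for w
  proof -
    have "\<forall>M\<in>set w. packed k M" using that S by auto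
    thus "packed k (prod w)" "monomial g w = (\<lambda>M. if rel (prod w) M then 1 else 0)"
      using monomial_eq_foldr[OF mult op_closed unit] g unfolding prod_def by auto
  qed
  have "\<forall>w\<in>W. c w = 0"
    if W: "finite W" "W \<subseteq> lists S" and zero: "\<forall>M. (\<Sum>w\<in>W. c w * monomial g w M) = 0" for W c
  proof (rule upset_indicators_independent[OF W(1)])
    show "inj_on prod W"
      using bij inj_on_subset W(2) unfolding bij_betw_def prod_def by blast
    show "\<forall>w\<in>W. packed k (prod w)" using monomial(1) W(2) by blast
    have "\<And>w. w \<in> W \<Longrightarrow> monomial g w = (\<lambda>M. if rel (prod w) M then 1 else 0)"
      using monomial(2) W(2) by blast
    hence "(\<Sum>w\<in>W. c w * (if rel (prod w) M then 1 else 0)) = (\<Sum>w\<in>W. c w * monomial g w M)" for M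
      by simp
    thus "(\<Sum>w\<in>W. c w * (if rel (prod w) M then 1 else 0)) = 0" for M
      using zero by simp
  qed
  moreover have "monomial g ` lists S = {(\<lambda>y. if rel M y then 1 else 0) | M. packed k M}"
  proof -
    have "monomial g ` lists S = (\<lambda>M y. if rel M y then 1 else 0) ` prod ` lists S"
      unfolding image_image using monomial(2) by (rule image_cong[OF refl])
    also have "prod ` lists S = {M. packed k M}"
      using bij unfolding bij_betw_def prod_def by blast
    finally show ?thesis by blast
  qed
  hence "\<exists>W c. finite W \<and> W \<subseteq> lists S \<and> x = (\<lambda>M. \<Sum>w\<in>W. c w * monomial g w M)"
    if "x \<in> PM k" for x
    using that finite_support_in_span[of x] span_image_explicit[of x "monomial g" "lists S"]
    unfolding PM_def by auto
  ultimately show ?thesis unfolding freely_generates_def by blast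
qed

section \<open>Packed matrices and their columns\<close>

definition square :: "nat \<Rightarrow> 'a list list \<Rightarrow> bool" where
  "square n M \<longleftrightarrow> length M = n \<and> (\<forall>r\<in>set M. length r = n)"

lemma packed_square: "packed k M \<Longrightarrow> square (length M) M"
  by (simp add: packed_def square_def)

lemma transpose_square:
  assumes "square n M"
  shows "transpose M = map (\<lambda>j. map (\<lambda>i. M ! i ! j) [0..<n]) [0..<n]"
proof -
  have "length M = n" "\<And>i. i < length M \<Longrightarrow> length (M ! i) = n"
    using assms by (auto simp: square_def)
  thus ?thesis using transpose_rectangle[of M n] by auto
qed

lemma square_transpose: "square n M \<Longrightarrow> square n (transpose M)"
  by (simp add: transpose_square) (simp add: square_def)

lemma nth_nth_transpose_square:
  "square n M \<Longrightarrow> i < n \<Longrightarrow> j < n \<Longrightarrow> transpose M ! i ! j = M ! j ! i"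
  by (simp add: transpose_square)

lemma square_eqI:
  assumes "square n M" "square n N" "\<And>i j. i < n \<Longrightarrow> j < n \<Longrightarrow> M ! i ! j = N ! i ! j"
  shows "M = N"
  using assms unfolding square_def by (auto intro!: nth_equalityI)

lemma transpose_transpose_square:
  assumes "square n M"
  shows "transpose (transpose M) = M"
proof (rule square_eqI[OF square_transpose[OF square_transpose[OF assms]] assms])
  fix i j assume "i < n" "j < n"
  thus "transpose (transpose M) ! i ! j = M ! i ! j"
    by (simp add: nth_nth_transpose_square[OF square_transpose[OF assms]]
        nth_nth_transpose_square[OF assms])
qed

lemma length_transpose_packed: "packed k M \<Longrightarrow> length (transpose M) = length M"
  using square_transpose[OF packed_square] by (simp add: square_def)

lemma transpose_transpose_packed: "packed k M \<Longrightarrow> transpose (transpose M) = M"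
  using transpose_transpose_square[OF packed_square] .

lemma cols_eq_transpose: "square n M \<Longrightarrow> cols M = transpose M"
  by (simp add: transpose_square) (auto simp: cols_def col_def square_def intro!: nth_equalityI)

lemma nth_transpose_square:
  assumes "square n M" "j < n"
  shows "transpose M ! j = col M j"
proof -
  have "transpose M = map (col M) [0..<n]"
    using cols_eq_transpose[OF assms(1)] assms(1) by (simp add: cols_def square_def)
  thus ?thesis using assms(2) by simp
qed

lemma bex_set_conv_ex_nth: "(\<exists>x\<in>set xs. P x) \<longleftrightarrow> (\<exists>i<length xs. P (xs ! i))"
  by (metis in_set_conv_nth)

lemma packed_iff_nth:
  assumes "square n M"
  shows "packed k M \<longleftrightarrow> (\<forall>i<n. \<forall>j<n. M ! i ! j \<le> k) \<and>
    (\<forall>i<n. \<exists>j<n. M ! i ! j \<noteq> 0) \<and> (\<forall>j<n. \<exists>i<n. M ! i ! j \<noteq> 0)"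
proof -
  have len: "length M = n" "\<And>i. i < n \<Longrightarrow> length (M ! i) = n"
    using assms by (auto simp: square_def)
  have "\<forall>r\<in>set M. length r = length M"
    using assms by (simp add: square_def)
  moreover have "(\<forall>r\<in>set M. \<forall>x\<in>set r. x \<le> k) \<longleftrightarrow> (\<forall>i<n. \<forall>j<n. M ! i ! j \<le> k)"
    using len by (simp add: all_set_conv_all_nth)
  moreover have "(\<forall>r\<in>set M. \<exists>x\<in>set r. x \<noteq> 0) \<longleftrightarrow> (\<forall>i<n. \<exists>j<n. M ! i ! j \<noteq> 0)"
    using len by (simp add: all_set_conv_all_nth bex_set_conv_ex_nth)
  moreover have "(\<forall>j<length M. \<exists>r\<in>set M. r ! j \<noteq> 0) \<longleftrightarrow> (\<forall>j<n. \<exists>i<n. M ! i ! j \<noteq> 0)"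
    using len by (simp add: bex_set_conv_ex_nth)
  ultimately show ?thesis unfolding packed_def ball_conj_distrib by argo
qed

lemma packed_transpose:
  assumes "packed k M"
  shows "packed k (transpose M)"
proof -
  have sq: "square (length M) M" using packed_square[OF assms] .
  have "\<forall>i<length M. \<forall>j<length M. transpose M ! i ! j = M ! j ! i"
    using nth_nth_transpose_square[OF sq] by blast
  thus ?thesis
    using assms unfolding packed_iff_nth[OF sq] packed_iff_nth[OF square_transpose[OF sq]]
    by (metis (no_types, lifting))
qed

text \<open>Applied to transposes: permuting the columns of a packed matrix keeps it packed.\<close>
lemma packed_cong: "set C = set D \<Longrightarrow> length C = length D \<Longrightarrow> packed k C = packed k D"
  by (simp add: packed_def)

lemma packed_swaps: "packed k C \<Longrightarrow> swaps R C D \<Longrightarrow> packed k D"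
  using packed_cong swaps_set swaps_length by metis

lemma packed_swaps_down: "packed k D \<Longrightarrow> swaps R C D \<Longrightarrow> packed k C"
  using packed_cong swaps_set swaps_length by metis

definition lead_zeros :: "nat list \<Rightarrow> nat" where
  "lead_zeros c = length (takeWhile (\<lambda>x. x = 0) c)"

definition trail_zeros :: "nat list \<Rightarrow> nat" where
  "trail_zeros c = lead_zeros (rev c)"

text \<open>The exchange condition \<open>s + p \<ge> n\<close> of the relation \<open>\<rightarrow>\<close>: every nonzero entry of \<open>c\<close>
  lies strictly above every nonzero entry of \<open>d\<close>.\<close>
definition lies_above :: "nat \<Rightarrow> nat list \<Rightarrow> nat list \<Rightarrow> bool" where
  "lies_above n c d \<longleftrightarrow> n \<le> trail_zeros c + lead_zeros d"

lemma lead_trail_zeros_less: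
  assumes "\<exists>x\<in>set c. x \<noteq> 0"
  shows "lead_zeros c + trail_zeros c < length c"
proof -
  obtain ys x zs where c: "c = ys @ x # zs" "x \<noteq> 0" "\<forall>y\<in>set ys. y = 0"
    using assms split_list_first_prop[of c "\<lambda>x. x \<noteq> 0"] by blast
  have "lead_zeros c = length ys"
    unfolding lead_zeros_def c(1) using c(2,3) by (simp add: takeWhile_append2)
  moreover have "length (takeWhile (\<lambda>x. x = 0) (as @ x # w)) \<le> length as" for as w
    using c(2) by (induction as) auto
  from this[of "rev zs" "rev ys"] have "trail_zeros c \<le> length zs"
    unfolding trail_zeros_def lead_zeros_def c(1) by simp
  ultimately show ?thesis unfolding c(1) by simp
qed

lemma square_swap_cols: "square n A \<Longrightarrow> square n (swap_cols i A)"
  by (auto simp: square_def swap_cols_def)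

lemma transpose_swap_cols:
  assumes sq: "square n A" and i: "Suc i < n"
  shows "transpose (swap_cols i A) =
     take i (transpose A) @ transpose A ! Suc i # transpose A ! i # drop (Suc (Suc i)) (transpose A)"
proof (rule nth_equalityI)
  have len: "length (transpose A) = n" "length (transpose (swap_cols i A)) = n"
    using square_transpose[OF sq] square_transpose[OF square_swap_cols[OF sq]]
    by (simp_all add: square_def)
  thus "length (transpose (swap_cols i A)) = length (take i (transpose A) @
      transpose A ! Suc i # transpose A ! i # drop (Suc (Suc i)) (transpose A))"
    using i by simp
  fix j assume "j < length (transpose (swap_cols i A))"
  hence j: "j < n" using len by simp
  define j' where "j' = (if j = i then Suc i else if j = Suc i then i else j)"
  have "col (swap_cols i A) j = col A j'"
    unfolding col_def swap_cols_def j'_def using sq i j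
    by (auto simp: square_def nth_list_update intro!: map_cong)
  moreover have "(take i (transpose A) @ transpose A ! Suc i # transpose A ! i #
      drop (Suc (Suc i)) (transpose A)) ! j = transpose A ! j'"
    unfolding j'_def using j i len
    by (auto simp: nth_append min_def nth_Cons' not_less numeral_2_eq_2 Suc_diff_Suc)
  moreover have "j' < n" using i j unfolding j'_def by simp
  ultimately show "transpose (swap_cols i A) ! j = (take i (transpose A) @
      transpose A ! Suc i # transpose A ! i # drop (Suc (Suc i)) (transpose A)) ! j"
    using nth_transpose_square[OF square_swap_cols[OF sq] j] nth_transpose_square[OF sq] by simp
qed

lemma swap_step_transpose_iff:
  assumes A: "square n A" and B: "square m B"
  shows "swap_step (lies_above n) (transpose A) (transpose B) \<longleftrightarrow>
    (\<exists>i. Suc i < n \<and> lies_above n (col A i) (col A (Suc i)) \<and> B = swap_cols i A)"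
proof
  assume "swap_step (lies_above n) (transpose A) (transpose B)"
  then obtain u c d v where tA: "transpose A = u @ c # d # v"
    and tB: "transpose B = u @ d # c # v" and cd: "lies_above n c d"
    by (auto elim: swap_step_elim)
  define i where "i = length u"
  have i: "Suc i < n" using square_transpose[OF A] tA i_def by (simp add: square_def)
  have "m = n" using square_transpose[OF A] square_transpose[OF B] tA tB by (simp add: square_def)
  have "col A i = c" "col A (Suc i) = d"
    using nth_transpose_square[OF A, of i] nth_transpose_square[OF A, of "Suc i"] i tA i_def
    by (simp_all add: nth_append)
  moreover have "transpose (swap_cols i A) = transpose B"
    using transpose_swap_cols[OF A i] tA tB i_def by (simp add: nth_append)
  hence "swap_cols i A = B"
    using transpose_transpose_square[OF square_swap_cols[OF A]] transpose_transpose_square[OF B]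
    by metis
  ultimately show "\<exists>i. Suc i < n \<and> lies_above n (col A i) (col A (Suc i)) \<and> B = swap_cols i A"
    using i cd by blast
next
  assume "\<exists>i. Suc i < n \<and> lies_above n (col A i) (col A (Suc i)) \<and> B = swap_cols i A"
  then obtain i where i: "Suc i < n" and cd: "lies_above n (col A i) (col A (Suc i))"
    and B: "B = swap_cols i A" by blast
  have "length (transpose A) = n" using square_transpose[OF A] by (simp add: square_def)
  hence "transpose A = take i (transpose A) @ transpose A ! i # transpose A ! Suc i #
      drop (Suc (Suc i)) (transpose A)"
    using i by (metis Cons_nth_drop_Suc Suc_lessD append_take_drop_id)
  thus "swap_step (lies_above n) (transpose A) (transpose B)"
    unfolding swap_step_def B transpose_swap_cols[OF A i]
    using cd nth_transpose_square[OF A] i by (metis Suc_lessD)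
qed

lemma mstep_iff_swap_step:
  "mstep k A B \<longleftrightarrow> packed k A \<and> packed k B \<and>
     swap_step (lies_above (length A)) (transpose A) (transpose B)"
proof (cases "packed k A \<and> packed k B")
  case True
  hence "mstep k A B \<longleftrightarrow>
      (\<exists>i. Suc i < length A \<and> lies_above (length A) (col A i) (col A (Suc i)) \<and> B = swap_cols i A)"
    unfolding mstep_def lies_above_def trail_zeros_def lead_zeros_def by simp
  also have "\<dots> \<longleftrightarrow> swap_step (lies_above (length A)) (transpose A) (transpose B)"
    using swap_step_transpose_iff[OF packed_square packed_square] True by blast
  finally show ?thesis using True by simp
qed (auto simp: mstep_def)

lemma le_M_imp_swaps:
  assumes "le_M k A B"
  shows "A = B \<or> packed k A \<and> packed k B \<and> swaps (lies_above (length A)) (transpose A) (transpose B)"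
  using assms unfolding le_M_def
proof (induction rule: rtranclp_induct)
  case (step B C)
  hence C: "packed k B" "packed k C" "swap_step (lies_above (length B)) (transpose B) (transpose C)"
    using mstep_iff_swap_step by blast+
  show ?case
  proof (cases "A = B")
    case False
    hence A: "packed k A" and AB: "swaps (lies_above (length A)) (transpose A) (transpose B)"
      using step.IH by blast+
    have "length B = length A"
      using swaps_length[OF AB] length_transpose_packed A C(1) by metis
    thus ?thesis using A AB C by (auto intro: rtranclp.rtrancl_into_rtrancl)
  qed (use C in auto)
qed simp

lemma swaps_imp_le_M:
  assumes A: "packed k A" and "swaps (lies_above (length A)) (transpose A) C"
  shows "le_M k A (transpose C)"
  using assms(2)
proof (induction rule: rtranclp_induct)
  case base
  thus ?case using transpose_transpose_packed[OF A] by (simp add: le_M_def)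
next
  case (step C D)
  have C: "packed k C" using packed_swaps[OF packed_transpose[OF A] step.hyps(1)] .
  have D: "packed k D" using packed_swaps[OF C r_into_rtranclp[of "swap_step _", OF step.hyps(2)]] .
  have "length (transpose C) = length A"
    using swaps_length[OF step.hyps(1)] length_transpose_packed[OF C] length_transpose_packed[OF A]
    by (simp add: packed_transpose transpose_transpose_packed[OF C])
  hence "mstep k (transpose C) (transpose D)"
    unfolding mstep_iff_swap_step using C D step.hyps(2)
    by (simp add: packed_transpose transpose_transpose_packed)
  thus ?case using step.IH unfolding le_M_def by (simp add: rtranclp.rtrancl_into_rtrancl)
qed

lemma le_M_iff_swaps:
  assumes "packed k A \<or> packed k B"
  shows "le_M k A B \<longleftrightarrow> packed k A \<and> packed k B \<and>
     swaps (lies_above (length A)) (transpose A) (transpose B)"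
proof
  assume "le_M k A B"
  thus "packed k A \<and> packed k B \<and> swaps (lies_above (length A)) (transpose A) (transpose B)"
    using le_M_imp_swaps[of k A B] assms by auto
next
  assume "packed k A \<and> packed k B \<and> swaps (lies_above (length A)) (transpose A) (transpose B)"
  thus "le_M k A B" using swaps_imp_le_M[of k A "transpose B"] transpose_transpose_packed[of k B]
    by simp
qed

lemma le_M_length: "le_M k A B \<Longrightarrow> length B = length A"
  unfolding le_M_def
  by (induction rule: rtranclp_induct) (auto simp: mstep_def swap_cols_def)

lemma le_M_iff_swaps_down:
  assumes "packed k B"
  shows "le_M k A B \<longleftrightarrow> packed k A \<and> swaps (lies_above (length B)) (transpose A) (transpose B)"
  using le_M_iff_swaps[of k A B] le_M_length[of k A B] swaps_length[of _ "transpose A" "transpose B"]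
    length_transpose_packed[of k A] length_transpose_packed[OF assms] assms
  by metis

lemma le_M_packed: "le_M k A B \<Longrightarrow> packed k A \<Longrightarrow> packed k B"
  using le_M_iff_swaps by blast

lemma le_M_packed_down: "le_M k A B \<Longrightarrow> packed k B \<Longrightarrow> packed k A"
  using le_M_iff_swaps by blast

lemma ex_le_M_up_iff:
  assumes A: "packed k A"
  shows "(\<exists>B. le_M k A B \<and> P B) \<longleftrightarrow>
    (\<exists>C. swaps (lies_above (length A)) (transpose A) C \<and> P (transpose C))"
proof
  assume "\<exists>B. le_M k A B \<and> P B"
  then obtain B where "le_M k A B" "P B" by blast
  thus "\<exists>C. swaps (lies_above (length A)) (transpose A) C \<and> P (transpose C)"
    using le_M_iff_swaps[of k A B] A transpose_transpose_packed[of k B] by auto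
next
  assume "\<exists>C. swaps (lies_above (length A)) (transpose A) C \<and> P (transpose C)"
  then obtain C where C: "swaps (lies_above (length A)) (transpose A) C" "P (transpose C)" by blast
  have "packed k C" using packed_swaps[OF packed_transpose[OF A] C(1)] .
  hence "le_M k A (transpose C)"
    using le_M_iff_swaps[of k A "transpose C"] A C(1)
    by (simp add: packed_transpose transpose_transpose_packed)
  thus "\<exists>B. le_M k A B \<and> P B" using C(2) by blast
qed

lemma ex_le_M_down_iff:
  assumes A: "packed k A"
  shows "(\<exists>B. le_M k B A \<and> P B) \<longleftrightarrow>
    (\<exists>C. swaps (lies_above (length A)) C (transpose A) \<and> P (transpose C))"
proof
  assume "\<exists>B. le_M k B A \<and> P B"
  then obtain B where "le_M k B A" "P B" by blast
  thus "\<exists>C. swaps (lies_above (length A)) C (transpose A) \<and> P (transpose C)"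
    using le_M_iff_swaps_down[OF A, of B] transpose_transpose_packed[of k B] by auto
next
  assume "\<exists>C. swaps (lies_above (length A)) C (transpose A) \<and> P (transpose C)"
  then obtain C where C: "swaps (lies_above (length A)) C (transpose A)" "P (transpose C)" by blast
  have "packed k C"
    using packed_cong[of C "transpose A" k] swaps_set[OF C(1)] swaps_length[OF C(1)]
      packed_transpose[OF A] by simp
  hence "le_M k (transpose C) A"
    using le_M_iff_swaps_down[OF A, of "transpose C"] C(1)
    by (simp add: packed_transpose transpose_transpose_packed)
  thus "\<exists>B. le_M k B A \<and> P B" using C(2) by blast
qed

lemma finite_le_M_up:
  assumes "packed k A"
  shows "finite {B. le_M k A B}"
proof (rule finite_subset)
  show "{B. le_M k A B} \<subseteq> transpose ` {C. swaps (lies_above (length A)) (transpose A) C}"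
  proof
    fix B assume "B \<in> {B. le_M k A B}"
    then obtain C where "swaps (lies_above (length A)) (transpose A) C" "transpose C = B"
      using ex_le_M_up_iff[OF assms, of "\<lambda>B'. B' = B"] by blast
    thus "B \<in> transpose ` {C. swaps (lies_above (length A)) (transpose A) C}" by blast
  qed
qed (rule finite_imageI[OF finite_swaps(1)])

lemma finite_le_M_down:
  assumes "packed k A"
  shows "finite {B. le_M k B A}"
proof (rule finite_subset)
  show "{B. le_M k B A} \<subseteq> transpose ` {C. swaps (lies_above (length A)) C (transpose A)}"
  proof
    fix B assume "B \<in> {B. le_M k B A}"
    then obtain C where "swaps (lies_above (length A)) C (transpose A)" "transpose C = B"
      using ex_le_M_down_iff[OF assms, of "\<lambda>B'. B' = B"] by blast
    thus "B \<in> transpose ` {C. swaps (lies_above (length A)) C (transpose A)}" by blast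
  qed
qed (rule finite_imageI[OF finite_swaps(2)])

lemma le_M_antisym:
  assumes "packed k A" "le_M k A B" "le_M k B A"
  shows "A = B"
proof -
  have "swaps (lies_above (length A)) (transpose A) (transpose B)"
    and "swaps (lies_above (length A)) (transpose B) (transpose A)"
    using assms le_M_iff_swaps le_M_length by metis+
  moreover have "lead_zeros c < lead_zeros d"
    if "c \<in> set (transpose A)" "lies_above (length A) c d" for c d
  proof -
    have "length c = length A" "\<exists>x\<in>set c. x \<noteq> 0"
      using packed_transpose[OF assms(1)] that(1) length_transpose_packed[OF assms(1)]
      by (auto simp: packed_def)
    thus ?thesis using lead_trail_zeros_less[of c] that(2) by (simp add: lies_above_def)
  qed
  ultimately have "transpose A = transpose B"
    by (intro swaps_antisym[of "transpose A" "lies_above (length A)" lead_zeros]) blast+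
  thus ?thesis
    using assms le_M_packed transpose_transpose_packed by metis
qed

lemma le_M_refl: "le_M k M M"
  by (simp add: le_M_def)

lemma le_M_trans: "le_M k A B \<Longrightarrow> le_M k B C \<Longrightarrow> le_M k A C"
  unfolding le_M_def by (rule rtranclp_trans)

lemma finite_upsets_order_le_M: "finite_upsets_order (packed k) (le_M k)"
  by unfold_locales (auto intro: le_M_refl le_M_trans le_M_antisym le_M_packed finite_le_M_up)

lemma finite_upsets_order_le_M_converse: "finite_upsets_order (packed k) (\<lambda>M M'. le_M k M' M)"
  by unfold_locales
    (auto intro: le_M_refl le_M_trans le_M_antisym le_M_packed_down finite_le_M_down)

section \<open>Block matrices\<close>

definition pad_below :: "nat \<Rightarrow> nat list \<Rightarrow> nat list" where
  "pad_below m c = c @ replicate m 0"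

definition pad_above :: "nat \<Rightarrow> nat list \<Rightarrow> nat list" where
  "pad_above m c = replicate m 0 @ c"

definition nonzero_columns :: "nat \<Rightarrow> nat list list \<Rightarrow> bool" where
  "nonzero_columns n cs \<longleftrightarrow> (\<forall>c\<in>set cs. length c = n \<and> (\<exists>x\<in>set c. x \<noteq> 0))"

lemma nonzero_columns_transpose: "packed k M \<Longrightarrow> nonzero_columns (length M) (transpose M)"
  using packed_transpose[of k M] length_transpose_packed[of k M]
  by (auto simp: packed_def nonzero_columns_def)

lemma takeWhile_zero_replicate_append:
  "takeWhile (\<lambda>x. x = 0) (replicate m (0::nat) @ c) = replicate m 0 @ takeWhile (\<lambda>x. x = 0) c"
  by (induction m) auto

lemma lead_zeros_pad_above: "lead_zeros (pad_above m c) = m + lead_zeros c"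
  by (simp add: lead_zeros_def pad_above_def takeWhile_zero_replicate_append)

lemma trail_zeros_pad_below: "trail_zeros (pad_below m c) = m + trail_zeros c"
  by (simp add: trail_zeros_def lead_zeros_def pad_below_def takeWhile_zero_replicate_append)

lemma lead_zeros_pad_below:
  assumes "\<exists>x\<in>set c. x \<noteq> 0"
  shows "lead_zeros (pad_below m c) = lead_zeros c"
proof -
  obtain x where "x \<in> set c" "x \<noteq> 0" using assms by blast
  thus ?thesis unfolding lead_zeros_def pad_below_def by simp
qed

lemma trail_zeros_pad_above:
  assumes "\<exists>x\<in>set c. x \<noteq> 0"
  shows "trail_zeros (pad_above m c) = trail_zeros c"
proof -
  obtain x where "x \<in> set (rev c)" "x \<noteq> 0" using assms by auto
  thus ?thesis unfolding trail_zeros_def lead_zeros_def pad_above_def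
    by (simp del: set_rev)
qed

lemma pad_below_neq_pad_above:
  assumes "length c = n1" "\<exists>x\<in>set c. x \<noteq> 0"
  shows "pad_below n2 c \<noteq> pad_above n1 d"
proof
  assume "pad_below n2 c = pad_above n1 d"
  hence "take n1 (pad_below n2 c) = take n1 (pad_above n1 d)" by simp
  hence "c = replicate n1 0" using assms(1) by (simp add: pad_below_def pad_above_def)
  thus False using assms(2) by simp
qed

lemma pad_lies_above:
  assumes "nonzero_columns n1 xs" "nonzero_columns n2 ys"
  shows "\<forall>x\<in>set xs. \<forall>y\<in>set ys. lies_above (n1 + n2) (pad_below n2 x) (pad_above n1 y)"
    and "\<And>x x'. x \<in> set xs \<Longrightarrow> x' \<in> set xs \<Longrightarrow>
      lies_above (n1 + n2) (pad_below n2 x) (pad_below n2 x') \<longleftrightarrow> lies_above n1 x x'"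
    and "\<And>y y'. y \<in> set ys \<Longrightarrow> y' \<in> set ys \<Longrightarrow>
      lies_above (n1 + n2) (pad_above n1 y) (pad_above n1 y') \<longleftrightarrow> lies_above n2 y y'"
    and "pad_below n2 ` set xs \<inter> pad_above n1 ` set ys = {}"
  using assms pad_below_neq_pad_above
  by (auto simp: lies_above_def nonzero_columns_def trail_zeros_pad_below lead_zeros_pad_above
      lead_zeros_pad_below trail_zeros_pad_above)

text \<open>A column of the upper block always lies above a column of the lower block, and padding
  does not change which swaps are allowed inside a block.\<close>
lemma swaps_ov_columns_iff:
  assumes "nonzero_columns n1 xs" "nonzero_columns n2 ys"
  shows "swaps (lies_above (n1 + n2)) (map (pad_below n2) xs @ map (pad_above n1) ys) zs \<longleftrightarrow>
    (\<exists>xs' ys'. swaps (lies_above n1) xs xs' \<and> swaps (lies_above n2) ys ys' \<and>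
       zs \<in> shuffles (map (pad_below n2) xs') (map (pad_above n1) ys'))"
  using pad_lies_above[OF assms] by (intro swaps_append_map_iff) auto

lemma swaps_un_columns_iff:
  assumes "nonzero_columns n1 xs" "nonzero_columns n2 ys"
  shows "swaps (lies_above (n1 + n2)) zs (map (pad_above n1) ys @ map (pad_below n2) xs) \<longleftrightarrow>
    (\<exists>xs' ys'. swaps (lies_above n1) xs' xs \<and> swaps (lies_above n2) ys' ys \<and>
       zs \<in> shuffles (map (pad_below n2) xs') (map (pad_above n1) ys'))"
proof -
  have "swaps (\<lambda>c d. lies_above (n1 + n2) d c) (map (pad_above n1) ys @ map (pad_below n2) xs) zs
    \<longleftrightarrow> (\<exists>ys' xs'. swaps (\<lambda>c d. lies_above n2 d c) ys ys' \<and> swaps (\<lambda>c d. lies_above n1 d c) xs xs' \<and>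
       zs \<in> shuffles (map (pad_above n1) ys') (map (pad_below n2) xs'))"
    using pad_lies_above[OF assms] by (intro swaps_append_map_iff) auto
  thus ?thesis
    unfolding swaps_converse_iff[of "lies_above (n1 + n2)"] swaps_converse_iff[of "lies_above n1"]
      swaps_converse_iff[of "lies_above n2"] shuffles_commutes[of "map (pad_above n1) _"]
    by blast
qed

lemma square_ov: "square n1 A \<Longrightarrow> square n2 B \<Longrightarrow> square (n1 + n2) (ov A B)"
  by (auto simp: square_def ov_def)

lemma square_un: "square n1 A \<Longrightarrow> square n2 B \<Longrightarrow> square (n1 + n2) (un A B)"
  by (auto simp: square_def un_def)

lemma transpose_ov:
  assumes A: "square n1 A" and B: "square n2 B"
  shows "transpose (ov A B) = map (pad_below n2) (transpose A) @ map (pad_above n1) (transpose B)"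
proof (rule square_eqI[OF square_transpose[OF square_ov[OF A B]]])
  show "square (n1 + n2) (map (pad_below n2) (transpose A) @ map (pad_above n1) (transpose B))"
    using square_transpose[OF A] square_transpose[OF B]
    by (auto simp: square_def pad_below_def pad_above_def)
  fix i j assume ij: "i < n1 + n2" "j < n1 + n2"
  have "transpose (ov A B) ! i ! j = ov A B ! j ! i"
    using nth_nth_transpose_square[OF square_ov[OF A B] ij] .
  also have "\<dots> = (map (pad_below n2) (transpose A) @ map (pad_above n1) (transpose B)) ! i ! j"
    using ij A B square_transpose[OF A] square_transpose[OF B]
    by (auto simp: nth_nth_transpose_square[OF A] nth_nth_transpose_square[OF B]
        ov_def nth_append pad_below_def pad_above_def square_def)
  finally show "transpose (ov A B) ! i ! j = (map (pad_below n2) (transpose A) @ map (pad_above n1) (transpose B)) ! i ! j" .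
qed

lemma transpose_un:
  assumes A: "square n1 A" and B: "square n2 B"
  shows "transpose (un A B) = map (pad_above n1) (transpose B) @ map (pad_below n2) (transpose A)"
proof (rule square_eqI[OF square_transpose[OF square_un[OF A B]]])
  show "square (n1 + n2) (map (pad_above n1) (transpose B) @ map (pad_below n2) (transpose A))"
    using square_transpose[OF A] square_transpose[OF B]
    by (auto simp: square_def pad_below_def pad_above_def)
  fix i j assume ij: "i < n1 + n2" "j < n1 + n2"
  have "transpose (un A B) ! i ! j = un A B ! j ! i"
    using nth_nth_transpose_square[OF square_un[OF A B] ij] .
  also have "\<dots> = (map (pad_above n1) (transpose B) @ map (pad_below n2) (transpose A)) ! i ! j"
    using ij A B square_transpose[OF A] square_transpose[OF B]
    by (auto simp: nth_nth_transpose_square[OF A] nth_nth_transpose_square[OF B]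
        un_def nth_append pad_below_def pad_above_def square_def)
  finally show "transpose (un A B) ! i ! j = (map (pad_above n1) (transpose B) @ map (pad_below n2) (transpose A)) ! i ! j" .
qed

lemma ex_less_add_iff:
  fixes m n :: nat
  shows "(\<exists>i<m + n. P i) \<longleftrightarrow> (\<exists>i<m. P i) \<or> (\<exists>i<n. P (m + i))"
proof
  assume "\<exists>i<m + n. P i"
  then obtain i where "i < m + n" "P i" by blast
  thus "(\<exists>i<m. P i) \<or> (\<exists>i<n. P (m + i))"
  proof (cases "i < m")
    case False
    thus ?thesis using \<open>i < m + n\<close> \<open>P i\<close> by (intro disjI2 exI[of _ "i - m"]) auto
  qed blast
next
  assume "(\<exists>i<m. P i) \<or> (\<exists>i<n. P (m + i))"
  thus "\<exists>i<m + n. P i" by (meson add_less_cancel_left trans_less_add1)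
qed

lemma all_less_add_iff:
  fixes m n :: nat
  shows "(\<forall>i<m + n. P i) \<longleftrightarrow> (\<forall>i<m. P i) \<and> (\<forall>i<n. P (m + i))"
  using ex_less_add_iff[of m n "\<lambda>i. \<not> P i"] by blast

lemma nth_nth_ov:
  assumes "square n1 A" "square n2 B" "i < n1 + n2" "j < n1 + n2"
  shows "ov A B ! i ! j = (if i < n1 then if j < n1 then A ! i ! j else 0
    else if j < n1 then 0 else B ! (i - n1) ! (j - n1))"
  using assms by (auto simp: ov_def nth_append square_def)

lemma packed_ov_iff:
  assumes A: "square n1 A" and B: "square n2 B"
  shows "packed k (ov A B) \<longleftrightarrow> packed k A \<and> packed k B"
  unfolding packed_iff_nth[OF square_ov[OF A B]] packed_iff_nth[OF A] packed_iff_nth[OF B]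
    all_less_add_iff ex_less_add_iff
  by (simp add: nth_nth_ov[OF A B] cong: conj_cong, blast)

lemma packed_rev: "packed k (rev M) \<longleftrightarrow> packed k M"
  by (simp add: packed_def)

lemma rev_ov: "rev (ov A B) = un (rev B) (rev A)"
  by (simp add: ov_def un_def rev_map)

lemma packed_ov: "packed k A \<Longrightarrow> packed k B \<Longrightarrow> packed k (ov A B)"
  using packed_ov_iff[OF packed_square packed_square] by blast

lemma un_eq_rev_ov: "un A B = rev (ov (rev B) (rev A))"
  by (simp add: rev_ov)

lemma packed_un: "packed k A \<Longrightarrow> packed k B \<Longrightarrow> packed k (un A B)"
  unfolding un_eq_rev_ov packed_rev by (intro packed_ov) (simp_all add: packed_rev)

lemma mem_Sh_c_iff:
  assumes M1: "packed k M1" and M2: "packed k M2"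
  shows "M \<in> Sh_c M1 M2 \<longleftrightarrow> packed k M \<and> transpose M \<in>
    shuffles (map (pad_below (length M2)) (transpose M1)) (map (pad_above (length M1)) (transpose M2))"
    (is "_ \<longleftrightarrow> _ \<and> _ \<in> shuffles ?xs ?ys")
proof -
  have "pad_below m = (\<lambda>c. c @ replicate m 0)" "pad_above m = (\<lambda>c. replicate m 0 @ c)" for m
    by (simp_all add: fun_eq_iff pad_below_def pad_above_def)
  hence Sh: "Sh_c M1 M2 = transpose ` shuffles ?xs ?ys"
    unfolding Sh_c_def using cols_eq_transpose[OF packed_square] M1 M2 by metis
  have "packed k (?xs @ ?ys)"
    using packed_transpose[OF packed_ov[OF M1 M2]] transpose_ov[OF packed_square[OF M1] packed_square[OF M2]]
    by simp
  hence packed_shuffle: "packed k C" if "C \<in> shuffles ?xs ?ys" for C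
    using packed_cong[of C "?xs @ ?ys" k] set_shuffles[OF that] length_shuffles[OF that] by simp
  show ?thesis
  proof
    assume "M \<in> Sh_c M1 M2"
    then obtain C where "C \<in> shuffles ?xs ?ys" "M = transpose C" unfolding Sh by blast
    thus "packed k M \<and> transpose M \<in> shuffles ?xs ?ys"
      using packed_shuffle packed_transpose transpose_transpose_packed by metis
  next
    assume "packed k M \<and> transpose M \<in> shuffles ?xs ?ys"
    thus "M \<in> Sh_c M1 M2" unfolding Sh using transpose_transpose_packed by (metis imageI)
  qed
qed

lemma length_ov: "length (ov A B) = length A + length B"
  by (simp add: ov_def)

lemma length_un: "length (un A B) = length A + length B"
  by (simp add: un_def)

lemma le_M_ov_iff:
  assumes A: "packed k A" and B: "packed k B"
  shows "le_M k (ov A B) M \<longleftrightarrow> (\<exists>M1 M2. le_M k A M1 \<and> le_M k B M2 \<and> M \<in> Sh_c M1 M2)"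
proof -
  define n1 n2 where "n1 = length A" and "n2 = length B"
  have Sh: "M \<in> Sh_c (transpose xs) (transpose ys) \<longleftrightarrow>
      packed k M \<and> transpose M \<in> shuffles (map (pad_below n2) xs) (map (pad_above n1) ys)"
    if "swaps (lies_above n1) (transpose A) xs" "swaps (lies_above n2) (transpose B) ys" for xs ys
  proof -
    have "packed k xs" "packed k ys" "length xs = n1" "length ys = n2"
      using that packed_swaps[OF packed_transpose] swaps_length length_transpose_packed A B
      unfolding n1_def n2_def by metis+
    thus ?thesis using mem_Sh_c_iff[OF packed_transpose packed_transpose]
      by (simp add: transpose_transpose_packed length_transpose_packed)
  qed
  have "le_M k (ov A B) M \<longleftrightarrow> packed k M \<and> swaps (lies_above (n1 + n2))
      (map (pad_below n2) (transpose A) @ map (pad_above n1) (transpose B)) (transpose M)"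
    using le_M_iff_swaps[of k "ov A B" M] packed_ov[OF A B]
      transpose_ov[OF packed_square[OF A] packed_square[OF B]]
    by (simp add: length_ov n1_def n2_def)
  also have "\<dots> \<longleftrightarrow> (\<exists>xs. swaps (lies_above n1) (transpose A) xs \<and>
      (\<exists>ys. swaps (lies_above n2) (transpose B) ys \<and> M \<in> Sh_c (transpose xs) (transpose ys)))"
    using swaps_ov_columns_iff[OF nonzero_columns_transpose[OF A] nonzero_columns_transpose[OF B]] Sh
    unfolding n1_def n2_def by blast
  also have "\<dots> \<longleftrightarrow> (\<exists>xs. swaps (lies_above n1) (transpose A) xs \<and>
      (\<exists>M2. le_M k B M2 \<and> M \<in> Sh_c (transpose xs) M2))"
    by (simp only: ex_le_M_up_iff[OF B, folded n2_def])
  also have "\<dots> \<longleftrightarrow> (\<exists>M1. le_M k A M1 \<and> (\<exists>M2. le_M k B M2 \<and> M \<in> Sh_c M1 M2))"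
    by (simp only: ex_le_M_up_iff[OF A, folded n1_def])
  finally show ?thesis by blast
qed

lemma le_M_un_iff:
  assumes A: "packed k A" and B: "packed k B"
  shows "le_M k M (un A B) \<longleftrightarrow> (\<exists>M1 M2. le_M k M1 A \<and> le_M k M2 B \<and> M \<in> Sh_c M1 M2)"
proof -
  define n1 n2 where "n1 = length A" and "n2 = length B"
  have Sh: "M \<in> Sh_c (transpose xs) (transpose ys) \<longleftrightarrow>
      packed k M \<and> transpose M \<in> shuffles (map (pad_below n2) xs) (map (pad_above n1) ys)"
    if "swaps (lies_above n1) xs (transpose A)" "swaps (lies_above n2) ys (transpose B)" for xs ys
  proof -
    have "packed k xs" "packed k ys" "length xs = n1" "length ys = n2"
      using that packed_swaps_down[OF packed_transpose] swaps_length length_transpose_packed A B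
      unfolding n1_def n2_def by metis+
    thus ?thesis using mem_Sh_c_iff[OF packed_transpose packed_transpose]
      by (simp add: transpose_transpose_packed length_transpose_packed)
  qed
  have "le_M k M (un A B) \<longleftrightarrow> packed k M \<and> swaps (lies_above (n1 + n2))
      (transpose M) (map (pad_above n1) (transpose B) @ map (pad_below n2) (transpose A))"
    using le_M_iff_swaps_down[OF packed_un[OF A B], of M]
      transpose_un[OF packed_square[OF A] packed_square[OF B]]
    by (simp add: length_un n1_def n2_def)
  also have "\<dots> \<longleftrightarrow> (\<exists>xs. swaps (lies_above n1) xs (transpose A) \<and>
      (\<exists>ys. swaps (lies_above n2) ys (transpose B) \<and> M \<in> Sh_c (transpose xs) (transpose ys)))"
    using swaps_un_columns_iff[OF nonzero_columns_transpose[OF A] nonzero_columns_transpose[OF B]] Sh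
    unfolding n1_def n2_def by blast
  also have "\<dots> \<longleftrightarrow> (\<exists>xs. swaps (lies_above n1) xs (transpose A) \<and>
      (\<exists>M2. le_M k M2 B \<and> M \<in> Sh_c (transpose xs) M2))"
    by (simp only: ex_le_M_down_iff[OF B, folded n2_def])
  also have "\<dots> \<longleftrightarrow> (\<exists>M1. le_M k M1 A \<and> (\<exists>M2. le_M k M2 B \<and> M \<in> Sh_c M1 M2))"
    by (simp only: ex_le_M_down_iff[OF A, folded n1_def])
  finally show ?thesis by blast
qed

section \<open>Products of the generators\<close>

lemma inj_pad_below: "inj (pad_below m)"
  by (simp add: inj_def pad_below_def)

lemma inj_pad_above: "inj (pad_above m)"
  by (simp add: inj_def pad_above_def)

text \<open>A shuffle of padded columns remembers its two factors: the columns coming from the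
  upper block are those with a nonzero entry among the first \<open>n1\<close> rows.\<close>
lemma Sh_c_unique:
  assumes p: "packed k M1" "packed k M2" "packed k M1'" "packed k M2'"
    and l: "length M1' = length M1" "length M2' = length M2"
    and M: "M \<in> Sh_c M1 M2" "M \<in> Sh_c M1' M2'"
  shows "M1 = M1' \<and> M2 = M2'"
proof -
  define n1 n2 where "n1 = length M1" and "n2 = length M2"
  define P where "P c \<longleftrightarrow> take n1 c \<noteq> replicate n1 (0::nat)" for c
  have factors: "filter P (transpose M) = map (pad_below n2) (transpose X) \<and>
      filter (\<lambda>c. \<not> P c) (transpose M) = map (pad_above n1) (transpose Y)"
    if "packed k X" "packed k Y" "length X = n1" "length Y = n2" "M \<in> Sh_c X Y" for X Y
  proof -
    have "transpose M \<in> shuffles (map (pad_below n2) (transpose X)) (map (pad_above n1) (transpose Y))"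
      using mem_Sh_c_iff[OF that(1,2)] that(3-5) by simp
    moreover have "\<forall>x\<in>set (map (pad_below n2) (transpose X)). P x"
      using nonzero_columns_transpose[OF that(1)] that(3)
      by (auto simp: P_def pad_below_def nonzero_columns_def)
    moreover have "\<forall>y\<in>set (map (pad_above n1) (transpose Y)). \<not> P y"
      by (simp add: P_def pad_above_def)
    ultimately show ?thesis using shuffles_filter by blast
  qed
  have "map (pad_below n2) (transpose M1) = map (pad_below n2) (transpose M1')"
    and "map (pad_above n1) (transpose M2) = map (pad_above n1) (transpose M2')"
    using factors[OF p(1,2) _ _ M(1)] factors[OF p(3,4) _ _ M(2)] l n1_def n2_def by auto
  hence "transpose M1 = transpose M1'" "transpose M2 = transpose M2'"
    using inj_pad_below inj_pad_above by (simp_all add: inj_map_eq_map)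
  thus ?thesis using p transpose_transpose_packed by metis
qed

lemma sum_indicator_unique_pair:
  assumes "finite S1" "finite S2"
    and uniq: "\<And>x y x' y'. x \<in> S1 \<Longrightarrow> y \<in> S2 \<Longrightarrow> x' \<in> S1 \<Longrightarrow> y' \<in> S2 \<Longrightarrow>
      P x y \<Longrightarrow> P x' y' \<Longrightarrow> x = x' \<and> y = y'"
  shows "(\<Sum>x\<in>S1. \<Sum>y\<in>S2. if P x y then 1 else 0) =
    (if \<exists>x\<in>S1. \<exists>y\<in>S2. P x y then 1 else (0::'a::semiring_1))"
proof -
  define T where "T = S1 \<times> S2 \<inter> {p. P (fst p) (snd p)}"
  have "(\<Sum>x\<in>S1. \<Sum>y\<in>S2. if P x y then 1 else 0) = (\<Sum>p\<in>S1 \<times> S2. of_bool (P (fst p) (snd p)) :: 'a)"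
    by (simp add: sum.cartesian_product case_prod_beta of_bool_def)
  also have "\<dots> = of_nat (card T)"
    using assms(1,2) by (simp add: T_def)
  also have "card T = (if \<exists>x\<in>S1. \<exists>y\<in>S2. P x y then 1 else 0)"
  proof (cases "\<exists>x\<in>S1. \<exists>y\<in>S2. P x y")
    case True
    then obtain x y where "x \<in> S1" "y \<in> S2" "P x y" by blast
    hence "T = {(x, y)}" unfolding T_def using uniq by fastforce
    thus ?thesis using True by simp
  next
    case False
    hence "T = {}" by (auto simp: T_def)
    thus ?thesis using False by simp
  qed
  finally show ?thesis by simp
qed

lemma pm_mult_indicators:
  assumes "finite S1" "finite S2"
    and "S1 \<subseteq> {M. packed k M \<and> length M = m}" "S2 \<subseteq> {M. packed k M \<and> length M = n}"
  shows "pm_mult (\<lambda>M. if M \<in> S1 then 1 else 0) (\<lambda>M. if M \<in> S2 then 1 else 0) =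
    (\<lambda>M. if \<exists>M1\<in>S1. \<exists>M2\<in>S2. M \<in> Sh_c M1 M2 then 1 else (0::'a::field))"
proof
  fix M
  have "pm_mult (\<lambda>M. if M \<in> S1 then 1 else 0) (\<lambda>M. if M \<in> S2 then 1 else 0) M =
      (\<Sum>M1\<in>S1. \<Sum>M2\<in>S2. if M \<in> Sh_c M1 M2 then 1 else (0::'a))"
    unfolding pm_mult_def by (simp cong: sum.cong)
  also have "\<dots> = (if \<exists>M1\<in>S1. \<exists>M2\<in>S2. M \<in> Sh_c M1 M2 then 1 else 0)"
    using assms Sh_c_unique[of k] by (intro sum_indicator_unique_pair) (auto, blast+)
  finally show "pm_mult (\<lambda>M. if M \<in> S1 then 1 else 0) (\<lambda>M. if M \<in> S2 then 1 else 0) M =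
      (if \<exists>M1\<in>S1. \<exists>M2\<in>S2. M \<in> Sh_c M1 M2 then 1 else (0::'a))" .
qed

lemma E_eq_indicator: "packed k A \<Longrightarrow> E k A = (\<lambda>M. if M \<in> {B. le_M k A B} then 1 else 0)"
  by (simp add: E_def)

lemma H_eq_indicator: "packed k A \<Longrightarrow> H k A = (\<lambda>M. if M \<in> {B. le_M k B A} then 1 else 0)"
  by (simp add: H_def)

lemma E_mult:
  assumes A: "packed k A" and B: "packed k B"
  shows "pm_mult (E k A) (E k B) = (E k (ov A B) :: _ \<Rightarrow> 'a::field)"
proof -
  have "pm_mult (E k A) (E k B) =
      (\<lambda>M. if \<exists>M1\<in>{X. le_M k A X}. \<exists>M2\<in>{X. le_M k B X}. M \<in> Sh_c M1 M2 then 1 else (0::'a))"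
    unfolding E_eq_indicator[OF A] E_eq_indicator[OF B]
    using finite_le_M_up[OF A] finite_le_M_up[OF B] le_M_packed[OF _ A] le_M_packed[OF _ B]
      le_M_length[of k A] le_M_length[of k B]
    by (intro pm_mult_indicators[where m = "length A" and n = "length B"]) auto
  thus ?thesis by (simp add: E_eq_indicator[OF packed_ov[OF A B]] le_M_ov_iff[OF A B])
qed

lemma H_mult:
  assumes A: "packed k A" and B: "packed k B"
  shows "pm_mult (H k A) (H k B) = (H k (un A B) :: _ \<Rightarrow> 'a::field)"
proof -
  have "pm_mult (H k A) (H k B) =
      (\<lambda>M. if \<exists>M1\<in>{X. le_M k X A}. \<exists>M2\<in>{X. le_M k X B}. M \<in> Sh_c M1 M2 then 1 else (0::'a))"
    unfolding H_eq_indicator[OF A] H_eq_indicator[OF B]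
    using finite_le_M_down[OF A] finite_le_M_down[OF B] le_M_packed_down[OF _ A]
      le_M_packed_down[OF _ B] le_M_length[of k _ A] le_M_length[of k _ B]
    by (intro pm_mult_indicators[where m = "length A" and n = "length B"]) auto
  thus ?thesis by (simp add: H_eq_indicator[OF packed_un[OF A B]] le_M_un_iff[OF A B])
qed

lemma packed_Nil: "packed k []"
  by (simp add: packed_def)

lemma E_Nil: "E k [] = F []"
  using le_M_length[of k "[]"] by (auto simp: E_def F_def le_M_def packed_Nil fun_eq_iff)

lemma H_Nil: "H k [] = F []"
  using le_M_length[of k _ "[]"] by (auto simp: H_def F_def le_M_def packed_Nil fun_eq_iff)

section \<open>Factorization into connected matrices\<close>

lemma ov_Nil_left [simp]: "ov [] M = M"
  by (simp add: ov_def)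

lemma ov_Nil_right [simp]: "ov M [] = M"
  by (simp add: ov_def)

lemma ov_assoc: "ov (ov A B) C = ov A (ov B C)"
  by (simp add: ov_def replicate_add length_ov)

lemma foldr_ov: "foldr ov w M = ov (foldr ov w []) M"
  by (induction w) (simp_all add: ov_assoc)

lemma packed_foldr_ov: "(\<And>M. M \<in> set w \<Longrightarrow> packed k M) \<Longrightarrow> packed k (foldr ov w [])"
  by (induction w) (auto simp: packed_Nil packed_ov)

lemma ov_factorization_exists:
  "packed k M \<Longrightarrow> \<exists>w\<in>lists {M. packed k M \<and> connected_pm k M}. foldr ov w [] = M"
proof (induction "length M" arbitrary: M rule: less_induct)
  case less
  show ?case
  proof (cases "M = [] \<or> connected_pm k M")
    case True
    thus ?thesis using less.prems by (auto intro: bexI[of _ "[]"] bexI[of _ "[M]"])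
  next
    case False
    then obtain M1 M2 where M: "packed k M1" "packed k M2" "M = ov M1 M2" "M1 \<noteq> M" "M2 \<noteq> M"
      unfolding connected_pm_def by blast
    hence "length M1 < length M" "length M2 < length M"
      by (auto simp: length_ov)
    then obtain w1 w2 where "w1 \<in> lists {M. packed k M \<and> connected_pm k M}" "foldr ov w1 [] = M1"
      and "w2 \<in> lists {M. packed k M \<and> connected_pm k M}" "foldr ov w2 [] = M2"
      using less.hyps M(1,2) by meson
    thus ?thesis using M(3) foldr_ov[of w1 M2] by (intro bexI[of _ "w1 @ w2"]) auto
  qed
qed

definition principal :: "nat \<Rightarrow> 'a list list \<Rightarrow> 'a list list" where
  "principal q M = map (take q) (take q M)"

lemma principal_ov_self: "square p a \<Longrightarrow> principal p (ov a X) = a"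
  by (simp add: principal_def ov_def square_def map_idI)

lemma principal_ov:
  assumes "square p a" "p \<le> q"
  shows "principal q (ov a X) = ov a (principal (q - p) X)"
  using assms by (auto simp: principal_def ov_def square_def take_map min_def)

lemma ov_cancel_left: "ov a X = ov a Y \<Longrightarrow> X = Y"
proof -
  have "map (drop (length a)) (drop (length a) (ov a X)) = X" for X
    by (simp add: ov_def comp_def)
  thus "ov a X = ov a Y \<Longrightarrow> X = Y" by metis
qed

text \<open>A shorter connected block at the top left of \<open>b = ov a Z\<close> must be all of \<open>b\<close>.\<close>
lemma ov_connected_prefix:
  assumes p: "packed k a" "packed k b" "packed k X"
    and c: "connected_pm k a" "connected_pm k b"
    and e: "ov a X = ov b Y" and le: "length a \<le> length b"
  shows "a = b"
proof -
  define Z where "Z = principal (length b - length a) X"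
  have "length a + length X = length b + length Y"
    using arg_cong[OF e, of length] by (simp add: length_ov)
  hence Z: "square (length b - length a) Z"
    using packed_square[OF p(3)] le by (auto simp: Z_def principal_def square_def dest!: in_set_takeD)
  have "b = principal (length b) (ov b Y)" using principal_ov_self[OF packed_square[OF p(2)]] ..
  also have "\<dots> = ov a Z"
    unfolding Z_def e[symmetric] using principal_ov[OF packed_square[OF p(1)] le] .
  finally have b: "b = ov a Z" .
  hence "packed k Z" using p(2) packed_ov_iff[OF packed_square[OF p(1)] Z] by simp
  hence "a = b \<or> Z = b" using c(2) p(1) b unfolding connected_pm_def by blast
  moreover have "Z \<noteq> b" using Z c(1) le by (cases a) (auto simp: connected_pm_def square_def)
  ultimately show ?thesis by blast
qed

lemma ov_connected_cancel:
  assumes "packed k a" "packed k b" "packed k X" "packed k Y"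
    and "connected_pm k a" "connected_pm k b" and e: "ov a X = ov b Y"
  shows "a = b \<and> X = Y"
proof -
  have "a = b"
    using ov_connected_prefix[OF assms(1,2,3,5,6) e] ov_connected_prefix[OF assms(2,1,4,6,5) e[symmetric]]
    by (metis nat_le_linear)
  thus ?thesis using e ov_cancel_left by blast
qed

lemma ov_factorization_unique:
  "inj_on (\<lambda>w. foldr ov w []) (lists {M. packed k M \<and> connected_pm k M})"
proof (rule inj_onI)
  fix u v assume "u \<in> lists {M. packed k M \<and> connected_pm k M}" "v \<in> lists {M. packed k M \<and> connected_pm k M}"
    "foldr ov u [] = foldr ov v []"
  thus "u = v"
  proof (induction u arbitrary: v rule: lists.induct)
    case Nil
    thus ?case by (cases v) (auto simp: ov_def connected_pm_def)
  next
    case (Cons a u)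
    then obtain b v' where v: "v = b # v'"
      by (cases v) (auto simp: ov_def connected_pm_def)
    have "\<forall>M\<in>set u. packed k M" "\<forall>M\<in>set v'. packed k M"
      using Cons.hyps Cons.prems(1) v by auto
    hence "packed k (foldr ov u [])" "packed k (foldr ov v' [])"
      using packed_foldr_ov by blast+
    moreover have "ov a (foldr ov u []) = ov b (foldr ov v' [])"
      using Cons.prems(2) v by simp
    ultimately have ab: "a = b \<and> foldr ov u [] = foldr ov v' []"
      using Cons.hyps Cons.prems(1) v by (intro ov_connected_cancel[of k]) auto
    moreover have "v' \<in> lists {M. packed k M \<and> connected_pm k M}" using Cons.prems(1) v by simp
    ultimately show ?case using Cons.IH v by blast
  qed
qed

lemma bij_betw_foldr_ov:
  "bij_betw (\<lambda>w. foldr ov w []) (lists {M. packed k M \<and> connected_pm k M}) {M. packed k M}"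
  unfolding bij_betw_def
proof
  show "(\<lambda>w. foldr ov w []) ` lists {M. packed k M \<and> connected_pm k M} = {M. packed k M}"
    using ov_factorization_exists by (force intro: packed_foldr_ov)
qed (rule ov_factorization_unique)

lemma anticonnected_iff_connected_rev: "anticonnected_pm k M \<longleftrightarrow> connected_pm k (rev M)"
proof -
  have swap: "(\<forall>M1 M2. Q M1 M2) \<longleftrightarrow> (\<forall>X Y. Q (rev Y) (rev X))" for Q :: "nat list list \<Rightarrow> _"
    by (metis rev_rev_ident)
  have "M = un (rev Y) (rev X) \<longleftrightarrow> rev M = ov X Y" for X Y
    by (auto simp: un_eq_rev_ov rev_swap)
  moreover have "rev Y = M \<longleftrightarrow> Y = rev M" for Y by auto
  ultimately show ?thesis
    unfolding anticonnected_pm_def connected_pm_def swap[of "\<lambda>M1 M2. _ M1 M2 \<longrightarrow> M1 = M \<or> M2 = M"]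
    by (simp add: packed_rev) blast
qed

lemma foldr_un_eq_rev_foldr_ov: "foldr un v [] = rev (foldr ov (rev (map rev v)) [])"
proof (induction v)
  case (Cons a v)
  have "rev (foldr ov (rev (map rev (a # v))) []) = rev (ov (foldr ov (rev (map rev v)) []) (rev a))"
    using foldr_ov[of "rev (map rev v)" "rev a"] by simp
  also have "\<dots> = un a (foldr un v [])" using Cons by (simp add: rev_ov)
  finally show ?case by simp
qed simp

lemma bij_betw_foldr_un:
  "bij_betw (\<lambda>v. foldr un v []) (lists {M. packed k M \<and> anticonnected_pm k M}) {M. packed k M}"
proof -
  have "bij_betw (\<lambda>v. rev (map rev v)) (lists {M. packed k M \<and> anticonnected_pm k M})
      (lists {M. packed k M \<and> connected_pm k M})"
    by (rule bij_betw_byWitness[where f' = "\<lambda>v. rev (map rev v)"])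
      (auto simp: rev_map anticonnected_iff_connected_rev packed_rev)
  moreover have "bij_betw rev {M. packed k M} {M :: nat list list. packed k M}"
    by (rule bij_betw_byWitness[where f' = rev]) (auto simp: packed_rev)
  ultimately have "bij_betw (rev \<circ> (\<lambda>w. foldr ov w []) \<circ> (\<lambda>v. rev (map rev v)))
      (lists {M. packed k M \<and> anticonnected_pm k M}) {M. packed k M}"
    using bij_betw_foldr_ov by (blast intro: bij_betw_trans)
  thus ?thesis by (simp add: comp_def foldr_un_eq_rev_foldr_ov)
qed

theorem theorem2p4:
  fixes k :: nat
  assumes "k \<ge> 1"
  shows "freely_generates k (E k :: nat list list \<Rightarrow> nat list list \<Rightarrow> 'a::field_char_0)
            {M. packed k M \<and> connected_pm k M}
       \<and> freely_generates k (H k :: nat list list \<Rightarrow> nat list list \<Rightarrow> 'a)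
            {M. packed k M \<and> anticonnected_pm k M}"
proof
  show "freely_generates k (E k :: _ \<Rightarrow> _ \<Rightarrow> 'a) {M. packed k M \<and> connected_pm k M}"
    by (rule freely_generates_if_unitriangular[OF finite_upsets_order_le_M _ E_mult packed_ov E_Nil _
          bij_betw_foldr_ov]) (auto simp: E_def)
  show "freely_generates k (H k :: _ \<Rightarrow> _ \<Rightarrow> 'a) {M. packed k M \<and> anticonnected_pm k M}"
    by (rule freely_generates_if_unitriangular[OF finite_upsets_order_le_M_converse _ H_mult packed_un H_Nil _
          bij_betw_foldr_un]) (auto simp: H_def)
qed

end
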